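(* Let $\beta>0$. (1) $\psi^*_{x,Y_M}(t)\ge0$ for all $t$. (2) For every $x\in(\lambda_t^-,\lambda^+)$ and $t\in\mathbb R$, if $M$ is large enough there exists $\gamma\in\mathbb R$ with $\psi'_{x,Y_M}(\gamma)=t$ and $\psi^*_{x,Y_M}(t)=\gamma t-\psi_{x,Y_M}(\gamma)$; moreover $\gamma<0$ when $t<\bar\lambda-x$ and $\gamma>0$ when $t>\bar\lambda-x$. (3) Let $x\in(\lambda_t^-,\lambda^+)$ and $t_1,t_2\in\mathbb R$. For sufficiently large $M$, let $\psi^*_{x,Y_M}(t_1)$ and $\psi^*_{x,Y_M}(t_2)$ be attained at $\alpha\in\mathbb R$ and $\gamma\in\mathbb R$ respectively. Then $\psi^*_{x,Y_M}(t_2)-\psi^*_{x,Y_M}(t_1)\le\gamma(t_2-t_1)$, with equality if and only if $t_1=t_2$.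
   Context: $Y_M$ has density $e^{-y}/(1-e^{-M})$ on $[0,M]$. Let $\lambda^\pm=(1\pm\sqrt\beta)^2$, $\mu_\lambda$ the probability measure $d\mu_\lambda=\Big((1-\tfrac1\beta)^+\delta(\lambda)+\frac{\sqrt{(\lambda-\lambda^-)^+(\lambda^+-\lambda)^+}}{2\pi\beta\lambda}\Big)d\lambda$, $\lambda_t^-=0$ if $\beta\ge1$ and $=\lambda^-$ if $\beta<1$, $\bar\lambda=\int\lambda\,d\mu_\lambda$. Define $\psi_{x,Y_M}(\alpha)=\int\log\mathrm E[e^{\alpha(\lambda-x)Y_M}]\,d\mu_\lambda$ and $\psi^*_{x,Y_M}(t)=\sup_{\alpha\in\mathbb R}[\alpha t-\psi_{x,Y_M}(\alpha)]$. *)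

theory Defs
  imports "HOL-Analysis.Analysis"
begin

definition mgf_YM :: "real \<Rightarrow> real \<Rightarrow> real" where
  "mgf_YM M s = (LINT y:{0..M}|lborel. exp (s * y) * (exp (- y) / (1 - exp (- M))))"

definition lam_plus :: "real \<Rightarrow> real" where
  "lam_plus \<beta> = (1 + sqrt \<beta>)\<^sup>2"

definition lam_minus :: "real \<Rightarrow> real" where
  "lam_minus \<beta> = (1 - sqrt \<beta>)\<^sup>2"

definition lam_t_minus :: "real \<Rightarrow> real" where
  "lam_t_minus \<beta> = (if \<beta> \<ge> 1 then 0 else lam_minus \<beta>)"

text \<open>Absolutely continuous part of the Marchenko--Pastur law mu_lambda.\<close>
definition mp_density :: "real \<Rightarrow> real \<Rightarrow> real" where
  "mp_density \<beta> l =
     sqrt (max 0 (l - lam_minus \<beta>) * max 0 (lam_plus \<beta> - l)) / (2 * pi * \<beta> * l)"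

definition mp_int :: "real \<Rightarrow> (real \<Rightarrow> real) \<Rightarrow> real" where
  "mp_int \<beta> f = max 0 (1 - 1 / \<beta>) * f 0 + (LINT l|lborel. mp_density \<beta> l * f l)"

definition lam_bar :: "real \<Rightarrow> real" where
  "lam_bar \<beta> = mp_int \<beta> (\<lambda>l. l)"

definition psi :: "real \<Rightarrow> real \<Rightarrow> real \<Rightarrow> real \<Rightarrow> real" where
  "psi \<beta> x M \<alpha> = mp_int \<beta> (\<lambda>l. ln (mgf_YM M (\<alpha> * (l - x))))"

text \<open>Legendre transform, valued in extended reals (may be +infinity).\<close>
definition psi_star :: "real \<Rightarrow> real \<Rightarrow> real \<Rightarrow> real \<Rightarrow> ereal" where
  "psi_star \<beta> x M t = (SUP \<alpha>\<in>(UNIV::real set). ereal (\<alpha> * t - psi \<beta> x M \<alpha>))"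

end

theory Submission
  imports Defs "HOL-Real_Asymp.Real_Asymp"
begin

(* Since psi(0) = 0, the supremum defining psi* is nonnegative.
   For M >= 1 one has log E exp(s Y_M) >= (M - 1) s - 2M for s >= 0 and >= s - 2M for s < 0, so
   psi(alpha) - t alpha grows linearly in |alpha| once M is large, provided both E(lambda - x)^+
   and E(x - lambda)^+ are positive under mu_lambda, which is exactly x in (lambda_t^-, lambda^+).
   A minimiser gamma then exists; it satisfies psi'(gamma) = t and attains psi*(t).
   Jensen gives psi(alpha) >= alpha E[Y_M] (bar lambda - x) with E[Y_M] -> 1, and comparing gamma
   with alpha = 0 fixes its sign; identifying this bound requires mu_lambda to have mass one,
   which follows from an explicit arcsine antiderivative.
   Part (3) holds for the conjugate of any function differentiable at gamma: gamma t1 - psi(gamma)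
   <= psi*(t1), with equality only if gamma also attains psi*(t1), forcing t1 = psi'(gamma) = t2. *)

section \<open>The truncated exponential variable Y_M\<close>

definition YM_density :: "real \<Rightarrow> real \<Rightarrow> real" where
  "YM_density M y = exp (- y) / (1 - exp (- M))"

definition YM_mean :: "real \<Rightarrow> real" where
  "YM_mean M = (1 - (M + 1) * exp (- M)) / (1 - exp (- M))"

lemma YM_density_nonneg: "M > 0 \<Longrightarrow> 0 \<le> YM_density M y"
  unfolding YM_density_def by simp

lemma mgf_YM_has_integral:
  assumes "M > 0"
  shows "((\<lambda>y. exp (s * y) * YM_density M y) has_integral mgf_YM M s) {0..M}"
proof -
  have cont: "continuous_on {0..M} (\<lambda>y. exp (s * y) * YM_density M y)"
    unfolding YM_density_def using assms by (intro continuous_intros) auto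
  have "mgf_YM M s = integral {0..M} (\<lambda>y. exp (s * y) * YM_density M y)"
    using set_borel_integral_eq_integral(2)[OF borel_integrable_atLeastAtMost'[OF cont]]
    unfolding mgf_YM_def YM_density_def by simp
  then show ?thesis using integrable_continuous_interval[OF cont] by (simp add: integrable_integral)
qed

lemma mgf_YM_closed_form:
  assumes "M > 0" "s \<noteq> 1"
  shows "mgf_YM M s = (exp ((s - 1) * M) - 1) / ((s - 1) * (1 - exp (- M)))"
proof -
  let ?Z = "1 - exp (- M)"
  have nz: "(s - 1) * ?Z \<noteq> 0" using assms by simp
  have "((\<lambda>y. exp ((s - 1) * y) / ((s - 1) * ?Z)) has_real_derivative
      (s - 1) * exp ((s - 1) * y) / ((s - 1) * ?Z)) (at y within {0..M})" for y
    by (intro DERIV_cdivide) (auto intro!: derivative_eq_intros)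
  moreover have "(s - 1) * exp ((s - 1) * y) / ((s - 1) * ?Z) = exp (s * y) * YM_density M y" for y
  proof -
    have "exp ((s - 1) * y) = exp (s * y) * exp (- y)" by (simp add: exp_add[symmetric] algebra_simps)
    then show ?thesis using assms(2) unfolding YM_density_def by simp
  qed
  ultimately have "((\<lambda>y. exp ((s - 1) * y) / ((s - 1) * ?Z)) has_real_derivative
      exp (s * y) * YM_density M y) (at y within {0..M})" for y
    by simp
  then have "((\<lambda>y. exp (s * y) * YM_density M y) has_integral
      exp ((s - 1) * M) / ((s - 1) * ?Z) - exp ((s - 1) * 0) / ((s - 1) * ?Z)) {0..M}"
    using assms by (intro fundamental_theorem_of_calculus)
      (auto simp: has_real_derivative_iff_has_vector_derivative)
  from has_integral_unique[OF mgf_YM_has_integral[OF assms(1)] this]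
  show ?thesis by (simp add: diff_divide_distrib)
qed

lemma mgf_YM_zero: "M > 0 \<Longrightarrow> mgf_YM M 0 = 1"
  using mgf_YM_closed_form[of M 0] by simp

lemma YM_mean_has_integral:
  assumes "M > 0"
  shows "((\<lambda>y. y * YM_density M y) has_integral YM_mean M) {0..M}"
proof -
  let ?Z = "1 - exp (- M)"
  have "?Z \<noteq> 0" using assms by simp
  then have mean: "YM_mean M = - (M + 1) * exp (- M) / ?Z - - (0 + 1) * exp (- 0) / ?Z"
    unfolding YM_mean_def by (simp add: field_simps)
  have "((\<lambda>y. - (y + 1) * exp (- y) / ?Z) has_real_derivative y * YM_density M y)
      (at y within {0..M})" for y
    unfolding YM_density_def times_divide_eq_right
    by (intro DERIV_cdivide) (auto intro!: derivative_eq_intros simp: algebra_simps)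
  then have "((\<lambda>y. y * YM_density M y) has_integral
      - (M + 1) * exp (- M) / ?Z - - (0 + 1) * exp (- 0) / ?Z) {0..M}"
    using assms by (intro fundamental_theorem_of_calculus)
      (auto simp: has_real_derivative_iff_has_vector_derivative)
  then show ?thesis unfolding mean .
qed

lemma YM_mean_bounds:
  assumes "M > 0"
  shows "0 \<le> YM_mean M" "YM_mean M \<le> 1"
proof -
  have "M + 1 \<le> exp M" using exp_ge_add_one_self[of M] by linarith
  then have "(M + 1) * exp (- M) \<le> 1" by (simp add: exp_minus field_simps)
  then show "0 \<le> YM_mean M" unfolding YM_mean_def using assms by simp
  have "exp (- M) \<le> (M + 1) * exp (- M)" using assms by simp
  then show "YM_mean M \<le> 1" unfolding YM_mean_def using assms by simp
qed

lemma YM_mean_tendsto: "(YM_mean \<longlongrightarrow> 1) at_top"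
  unfolding YM_mean_def[abs_def] by real_asymp

lemma exp_YM_mean_le_mgf_YM:
  assumes "M > 0"
  shows "exp (s * YM_mean M) \<le> mgf_YM M s"
proof -
  let ?m = "YM_mean M" and ?p = "YM_density M"
  have "((\<lambda>y. exp (s * ?m) * ((1 - s * ?m) * ?p y + s * (y * ?p y))) has_integral
      exp (s * ?m) * ((1 - s * ?m) * 1 + s * ?m)) {0..M}"
    using mgf_YM_has_integral[OF assms, of 0] YM_mean_has_integral[OF assms] mgf_YM_zero[OF assms]
    by (intro has_integral_mult_right has_integral_add) auto
  moreover have "exp (s * ?m) * ((1 - s * ?m) * ?p y + s * (y * ?p y)) \<le> exp (s * y) * ?p y" for y
  proof -
    have "exp (s * ?m) * (1 + s * (y - ?m)) \<le> exp (s * ?m) * exp (s * (y - ?m))"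
      using exp_ge_add_one_self[of "s * (y - ?m)"] by simp
    also have "\<dots> = exp (s * y)" by (simp add: exp_add[symmetric] algebra_simps)
    finally have "exp (s * ?m) * (1 + s * (y - ?m)) * ?p y \<le> exp (s * y) * ?p y"
      by (rule mult_right_mono) (rule YM_density_nonneg[OF assms])
    then show ?thesis by (simp add: algebra_simps)
  qed
  ultimately show ?thesis
    using has_integral_le[OF _ mgf_YM_has_integral[OF assms]] by simp
qed

lemma mgf_YM_pos: "M > 0 \<Longrightarrow> 0 < mgf_YM M s"
  using exp_YM_mean_le_mgf_YM[of M s] by (meson exp_gt_zero less_le_trans)

lemma ln_mgf_YM_ge_mean: "M > 0 \<Longrightarrow> s * YM_mean M \<le> ln (mgf_YM M s)"
  using exp_YM_mean_le_mgf_YM[of M s] mgf_YM_pos[of M s] by (simp add: ln_ge_iff)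

lemma mgf_YM_mono_bounds:
  assumes "M > 0" "s \<le> s'"
  shows "mgf_YM M s \<le> mgf_YM M s'" "mgf_YM M s' \<le> exp ((s' - s) * M) * mgf_YM M s"
proof -
  note p = YM_density_nonneg[OF assms(1)]
  show "mgf_YM M s \<le> mgf_YM M s'"
    using assms p
    by (intro has_integral_le[OF mgf_YM_has_integral mgf_YM_has_integral] mult_right_mono)
      (auto intro: mult_right_mono)
  have "exp (s' * y) * YM_density M y \<le> exp ((s' - s) * M) * (exp (s * y) * YM_density M y)"
    if "y \<in> {0..M}" for y
  proof -
    have "(s' - s) * y \<le> (s' - s) * M" using that assms by (intro mult_left_mono) auto
    then have "exp (s' * y) \<le> exp ((s' - s) * M) * exp (s * y)"
      by (simp add: exp_add[symmetric] algebra_simps)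
    then show ?thesis using p[of y] by (metis mult.assoc mult_right_mono)
  qed
  then show "mgf_YM M s' \<le> exp ((s' - s) * M) * mgf_YM M s"
    by (intro has_integral_le[OF mgf_YM_has_integral[OF assms(1)]
      has_integral_mult_right[OF mgf_YM_has_integral[OF assms(1)]]]) auto
qed

lemma ln_mgf_YM_Lipschitz:
  assumes "M > 0"
  shows "\<bar>ln (mgf_YM M s) - ln (mgf_YM M s')\<bar> \<le> M * \<bar>s - s'\<bar>"
proof -
  have *: "\<bar>ln (mgf_YM M s) - ln (mgf_YM M s')\<bar> \<le> M * \<bar>s - s'\<bar>" if "s \<le> s'" for s s'
  proof -
    note bounds = mgf_YM_mono_bounds[OF assms that] and pos = mgf_YM_pos[OF assms]
    have "ln (mgf_YM M s') \<le> ln (exp ((s' - s) * M) * mgf_YM M s)"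
      using bounds pos by simp
    also have "\<dots> = (s' - s) * M + ln (mgf_YM M s)" using pos[of s] by (simp add: ln_mult)
    finally have "ln (mgf_YM M s') - ln (mgf_YM M s) \<le> M * (s' - s)" by (simp add: algebra_simps)
    moreover have "ln (mgf_YM M s) \<le> ln (mgf_YM M s')" using bounds(1) pos[of s] pos[of s'] by simp
    ultimately show ?thesis using that by (simp add: abs_if)
  qed
  show ?thesis using *[of s s'] *[of s' s] by (cases "s \<le> s'") (auto simp: abs_minus_commute)
qed

lemma ln_mgf_YM_ge_linear:
  assumes "M \<ge> 1" "s \<ge> 0"
  shows "s * (M - 1) - 2 * M \<le> ln (mgf_YM M s)"
proof (cases "s \<le> 2")
  case True
  then have "s * (M - 1) \<le> 2 * (M - 1)" using assms by (intro mult_right_mono) auto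
  moreover have "0 \<le> s * YM_mean M" using YM_mean_bounds[of M] assms by simp
  ultimately show ?thesis using ln_mgf_YM_ge_mean[of M s] assms by simp
next
  case False
  define u where "u = s - 1"
  have M: "M > 0" and u: "u > 1" using assms False unfolding u_def by auto
  have "1 * 1 \<le> u * M" using u assms by (intro mult_mono) auto
  then have "exp 1 \<le> exp (u * M)" by simp
  then have e: "2 \<le> exp (u * M)" using exp_ge_add_one_self[of 1] by linarith
  have "2 * u \<le> exp u"
  proof -
    have "u \<le> exp (u - 1)" using exp_ge_add_one_self[of "u - 1"] by simp
    then have "u * exp 1 \<le> exp u" by (simp add: exp_diff field_simps)
    moreover have "u * 2 \<le> u * exp 1" using exp_ge_add_one_self[of 1] u by (intro mult_left_mono) auto
    ultimately show ?thesis by simp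
  qed
  then have "exp (u * M - u) \<le> exp (u * M) / (2 * u)"
    using u by (simp add: exp_diff) (rule divide_left_mono, auto)
  also have "\<dots> \<le> (exp (u * M) - 1) / u" using e u by (simp add: field_simps)
  also have "\<dots> \<le> (exp (u * M) - 1) / (u * (1 - exp (- M)))"
    using e u M by (intro divide_left_mono) (auto simp: mult_left_le)
  also have "\<dots> = mgf_YM M s" using mgf_YM_closed_form[OF M, of s] False unfolding u_def by simp
  finally have "u * M - u \<le> ln (mgf_YM M s)" using mgf_YM_pos[OF M, of s] by (simp add: ln_ge_iff)
  then show ?thesis unfolding u_def using assms by (simp add: algebra_simps)
qed

lemma ln_mgf_YM_ge_piecewise_linear:
  assumes "M \<ge> 1" "0 \<le> a"
  shows "a * ((M - 1) * max u 0 - max (- u) 0) - 2 * M \<le> ln (mgf_YM M (a * u))"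
proof (cases "u \<ge> 0")
  case True
  then show ?thesis using ln_mgf_YM_ge_linear[OF assms(1), of "a * u"] assms(2) by (simp add: mult_ac)
next
  case False
  then have "a * u \<le> 0" using assms by (simp add: mult_nonneg_nonpos)
  then have "0 \<le> (a * u) * (YM_mean M - 1)"
    using YM_mean_bounds[of M] assms by (intro mult_nonpos_nonpos) auto
  then have "a * u \<le> a * u * YM_mean M" by (simp add: algebra_simps)
  then show ?thesis using False assms ln_mgf_YM_ge_mean[of M "a * u"] by simp
qed

lemma ln_mgf_YM_has_derivative:
  assumes "M > 0"
  shows "((\<lambda>s. ln (mgf_YM M s)) has_real_derivative
    integral {0..M} (\<lambda>y. y * exp (s * y) * YM_density M y) / mgf_YM M s) (at s)"
proof -
  have "((\<lambda>s. integral (cbox 0 M) (\<lambda>y. exp (s * y) * YM_density M y)) has_real_derivative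
      integral (cbox 0 M) (\<lambda>y. y * exp (s * y) * YM_density M y)) (at s within UNIV)"
  proof (rule leibniz_rule_field_derivative[where fx = "\<lambda>s y. y * exp (s * y) * YM_density M y"])
    show "continuous_on (UNIV \<times> cbox 0 M) (\<lambda>(s, y). y * exp (s * y) * YM_density M y)"
      unfolding YM_density_def using assms by (auto intro!: continuous_intros simp: split_beta)
    show "(\<lambda>y. exp (s * y) * YM_density M y) integrable_on cbox 0 M" for s
      using mgf_YM_has_integral[OF assms] by auto
  qed (auto intro!: derivative_eq_intros)
  moreover have "mgf_YM M = (\<lambda>s. integral (cbox 0 M) (\<lambda>y. exp (s * y) * YM_density M y))"
    using mgf_YM_has_integral[OF assms] by (auto intro!: integral_unique[symmetric])
  ultimately show ?thesis
    using mgf_YM_pos[OF assms] by (auto intro!: derivative_eq_intros)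
qed

lemma continuous_on_ln_mgf_YM: "M > 0 \<Longrightarrow> continuous_on UNIV (\<lambda>s. ln (mgf_YM M s))"
  using ln_mgf_YM_has_derivative by (metis DERIV_isCont continuous_at_imp_continuous_on)

lemma continuous_on_ln_mgf_YM_comp:
  "M > 0 \<Longrightarrow> continuous_on UNIV u \<Longrightarrow> continuous_on UNIV (\<lambda>l. ln (mgf_YM M (u l)))"
  using continuous_on_compose2[OF continuous_on_ln_mgf_YM] by blast

section \<open>An arcsine antiderivative\<close>

definition sqrt_quadratic_div_antideriv :: "real \<Rightarrow> real \<Rightarrow> real \<Rightarrow> real" where
  "sqrt_quadratic_div_antideriv a b l = sqrt ((l - a) * (b - l))
     + (a + b) / 2 * arcsin ((2 * l - a - b) / (b - a))
     - sqrt (a * b) * arcsin ((a + b - 2 * a * b / l) / (b - a))"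

lemma one_minus_arcsin_arg1_sq:
  assumes "a < (b::real)"
  shows "1 - ((2 * l - a - b) / (b - a))\<^sup>2 = 4 * ((l - a) * (b - l)) / (b - a)\<^sup>2"
proof -
  have "1 - ((2 * l - a - b) / (b - a))\<^sup>2 = ((b - a)\<^sup>2 - (2 * l - a - b)\<^sup>2) / (b - a)\<^sup>2"
    using assms by (simp add: field_simps)
  also have "(b - a)\<^sup>2 - (2 * l - a - b)\<^sup>2 = 4 * ((l - a) * (b - l))"
    by (simp add: power2_eq_square algebra_simps)
  finally show ?thesis .
qed

lemma one_minus_arcsin_arg2_sq:
  assumes "0 < a" "a < (b::real)" "l \<noteq> 0"
  shows "1 - ((a + b - 2 * a * b / l) / (b - a))\<^sup>2 = 4 * (a * b) * ((l - a) * (b - l)) / (l * (b - a))\<^sup>2"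
proof -
  have "1 - ((a + b - 2 * a * b / l) / (b - a))\<^sup>2
      = ((l * (b - a))\<^sup>2 - ((a + b) * l - 2 * a * b)\<^sup>2) / (l * (b - a))\<^sup>2"
    using assms by (simp add: field_simps)
  also have "(l * (b - a))\<^sup>2 - ((a + b) * l - 2 * a * b)\<^sup>2 = 4 * (a * b) * ((l - a) * (b - l))"
    by (simp add: power2_eq_square algebra_simps)
  finally show ?thesis .
qed

lemma power2_le_1_imp_bounds: "(u::real)\<^sup>2 \<le> 1 \<Longrightarrow> -1 \<le> u \<and> u \<le> 1"
  using abs_square_le_1[of u] by (simp add: abs_le_iff)

lemma arcsin_comp_has_real_derivative:
  assumes "(u has_real_derivative D) (at l)" "1 - (u l)\<^sup>2 = r\<^sup>2" "0 < r"
  shows "((\<lambda>l. arcsin (u l)) has_real_derivative D / r) (at l)"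
proof -
  have "(u l)\<^sup>2 < 1" using assms(2,3) by (smt (verit) zero_less_power2)
  then have "\<bar>u l\<bar> < 1" by (simp add: abs_square_less_1)
  moreover have "sqrt (1 - (u l)\<^sup>2) = r" using assms(2,3) by simp
  ultimately show ?thesis
    using assms(1) by (auto intro!: derivative_eq_intros simp: abs_less_iff divide_inverse mult.commute)
qed

lemma continuous_on_sqrt_quadratic_div_antideriv:
  assumes "0 \<le> a" "a < b"
  shows "continuous_on {a..b} (sqrt_quadratic_div_antideriv a b)"
proof -
  have "-1 \<le> (2 * l - a - b) / (b - a) \<and> (2 * l - a - b) / (b - a) \<le> 1" if "l \<in> {a..b}" for l
  proof -
    have "0 \<le> 4 * ((l - a) * (b - l)) / (b - a)\<^sup>2" using that by simp
    then have "((2 * l - a - b) / (b - a))\<^sup>2 \<le> 1" using one_minus_arcsin_arg1_sq[OF assms(2), of l] by linarith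
    then show ?thesis by (rule power2_le_1_imp_bounds)
  qed
  then have "continuous_on {a..b}
      (\<lambda>l. sqrt ((l - a) * (b - l)) + (a + b) / 2 * arcsin ((2 * l - a - b) / (b - a)))"
    using assms by (intro continuous_intros) auto
  moreover have "continuous_on {a..b} (\<lambda>l. sqrt (a * b) * arcsin ((a + b - 2 * a * b / l) / (b - a)))"
  proof (cases "a = 0")
    case False
    have "-1 \<le> (a + b - 2 * a * b / l) / (b - a) \<and> (a + b - 2 * a * b / l) / (b - a) \<le> 1"
      if "l \<in> {a..b}" for l
    proof -
      have "0 \<le> 4 * (a * b) * ((l - a) * (b - l)) / (l * (b - a))\<^sup>2" using that assms by simp
      moreover have "1 - ((a + b - 2 * a * b / l) / (b - a))\<^sup>2
          = 4 * (a * b) * ((l - a) * (b - l)) / (l * (b - a))\<^sup>2"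
        using one_minus_arcsin_arg2_sq[of a b l] assms False that by simp
      ultimately have "((a + b - 2 * a * b / l) / (b - a))\<^sup>2 \<le> 1" by linarith
      then show ?thesis by (rule power2_le_1_imp_bounds)
    qed
    then show ?thesis using assms False by (intro continuous_intros) auto
  qed simp
  ultimately show ?thesis
    unfolding sqrt_quadratic_div_antideriv_def[abs_def] by (rule continuous_on_diff)
qed

lemma arcsin_arg1_has_derivative:
  assumes "a < l" "l < b"
  shows "((\<lambda>l. arcsin ((2 * l - a - b) / (b - a))) has_real_derivative
    1 / sqrt ((l - a) * (b - l))) (at l)"
proof -
  define R where "R = sqrt ((l - a) * (b - l))"
  have R: "R > 0" "R\<^sup>2 = (l - a) * (b - l)" unfolding R_def using assms by auto
  have "((\<lambda>l. arcsin ((2 * l - a - b) / (b - a))) has_real_derivative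
      2 / (b - a) / (2 * R / (b - a))) (at l)"
  proof (rule arcsin_comp_has_real_derivative)
    show "((\<lambda>l. (2 * l - a - b) / (b - a)) has_real_derivative 2 / (b - a)) (at l)"
      by (intro DERIV_cdivide) (auto intro!: derivative_eq_intros)
    show "1 - ((2 * l - a - b) / (b - a))\<^sup>2 = (2 * R / (b - a))\<^sup>2"
      using one_minus_arcsin_arg1_sq[of a b l] R assms by (simp add: power_divide power_mult_distrib)
  qed (use R assms in simp)
  moreover have "2 / (b - a) / (2 * R / (b - a)) = 1 / R" using R assms by (simp add: field_simps)
  ultimately show ?thesis unfolding R_def by simp
qed

lemma sqrt_mult_arcsin_arg2_has_derivative:
  assumes "0 \<le> a" "a < l" "l < b"
  shows "((\<lambda>l. sqrt (a * b) * arcsin ((a + b - 2 * a * b / l) / (b - a))) has_real_derivative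
    a * b / (l * sqrt ((l - a) * (b - l)))) (at l)"
proof (cases "a = 0")
  case False
  define R where "R = sqrt ((l - a) * (b - l))"
  define S where "S = sqrt (a * b)"
  have R: "R > 0" "R\<^sup>2 = (l - a) * (b - l)" unfolding R_def using assms by auto
  have S: "S > 0" "S\<^sup>2 = a * b" unfolding S_def using assms False by auto
  have "((\<lambda>l. arcsin ((a + b - 2 * a * b / l) / (b - a))) has_real_derivative
      2 * a * b / l\<^sup>2 / (b - a) / (2 * S * R / (l * (b - a)))) (at l)"
  proof (rule arcsin_comp_has_real_derivative)
    show "((\<lambda>l. (a + b - 2 * a * b / l) / (b - a)) has_real_derivative 2 * a * b / l\<^sup>2 / (b - a)) (at l)"
      using assms by (intro DERIV_cdivide) (auto intro!: derivative_eq_intros simp: power2_eq_square)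
    show "1 - ((a + b - 2 * a * b / l) / (b - a))\<^sup>2 = (2 * S * R / (l * (b - a)))\<^sup>2"
      using one_minus_arcsin_arg2_sq[of a b l] R S assms False
      by (simp add: power_divide power_mult_distrib)
  qed (use R S assms in simp)
  moreover have "S * (2 * a * b / l\<^sup>2 / (b - a) / (2 * S * R / (l * (b - a)))) = a * b / (l * R)"
    using R S assms by (simp add: field_simps power2_eq_square)
  ultimately show ?thesis unfolding S_def[symmetric] R_def[symmetric] by (metis DERIV_cmult)
qed simp

lemma sqrt_quadratic_div_antideriv_has_derivative:
  assumes "0 \<le> a" "a < l" "l < b"
  shows "(sqrt_quadratic_div_antideriv a b has_real_derivative sqrt ((l - a) * (b - l)) / l) (at l)"
proof -
  define R where "R = sqrt ((l - a) * (b - l))"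
  have R: "R > 0" "R\<^sup>2 = (l - a) * (b - l)" unfolding R_def using assms by auto
  have "((\<lambda>l. sqrt ((l - a) * (b - l))) has_real_derivative (a + b - 2 * l) / (2 * R)) (at l)"
    using R assms unfolding R_def by (auto intro!: derivative_eq_intros simp: field_simps)
  then have "(sqrt_quadratic_div_antideriv a b has_real_derivative
      (a + b - 2 * l) / (2 * R) + (a + b) / 2 * (1 / R) - a * b / (l * R)) (at l)"
    using arcsin_arg1_has_derivative[OF assms(2,3)] sqrt_mult_arcsin_arg2_has_derivative[OF assms]
    unfolding sqrt_quadratic_div_antideriv_def[abs_def] R_def by (intro DERIV_diff DERIV_add DERIV_cmult)
  moreover have "(a + b - 2 * l) / (2 * R) + (a + b) / 2 * (1 / R) - a * b / (l * R)
      = ((a + b - l) * l - a * b) / (l * R)"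
    using R assms by (simp add: field_simps)
  also have "(a + b - l) * l - a * b = R\<^sup>2" using R by (simp add: algebra_simps)
  also have "R\<^sup>2 / (l * R) = R / l" using R(1) by (simp add: power2_eq_square)
  ultimately show ?thesis unfolding R_def by simp
qed

lemma sqrt_quadratic_div_antideriv_diff:
  assumes "0 \<le> a" "a < b"
  shows "sqrt_quadratic_div_antideriv a b b - sqrt_quadratic_div_antideriv a b a
    = pi * (a + b) / 2 - pi * sqrt (a * b)"
proof -
  have "sqrt (a * b) * arcsin ((a + b - 2 * a * b / b) / (b - a))
      - sqrt (a * b) * arcsin ((a + b - 2 * a * b / a) / (b - a)) = pi * sqrt (a * b)"
  proof (cases "a = 0")
    case False
    then have "(a + b - 2 * a * b / b) / (b - a) = 1" "(a + b - 2 * a * b / a) / (b - a) = -1"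
      using assms by (auto simp: field_simps)
    then show ?thesis by simp
  qed simp
  moreover have "(2 * b - a - b) / (b - a) = 1" "(2 * a - a - b) / (b - a) = -1"
    using assms by (auto simp: field_simps)
  ultimately show ?thesis
    unfolding sqrt_quadratic_div_antideriv_def by (simp add: algebra_simps add_divide_distrib)
qed

lemma sqrt_quadratic_div_has_integral:
  assumes "0 \<le> a" "a < b"
  shows "((\<lambda>l. sqrt ((l - a) * (b - l)) / l) has_integral pi * (a + b) / 2 - pi * sqrt (a * b)) {a..b}"
  using fundamental_theorem_of_calculus_interior[OF _ continuous_on_sqrt_quadratic_div_antideriv[OF assms]]
    sqrt_quadratic_div_antideriv_has_derivative[OF assms(1)] sqrt_quadratic_div_antideriv_diff[OF assms]
    assms(2)
  by (auto simp: has_real_derivative_iff_has_vector_derivative[symmetric])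

section \<open>The Marchenko-Pastur law\<close>

lemma lam_minus_nonneg: "0 \<le> lam_minus \<beta>"
  unfolding lam_minus_def by simp

lemma lam_minus_less_lam_plus: "\<beta> > 0 \<Longrightarrow> lam_minus \<beta> < lam_plus \<beta>"
  unfolding lam_minus_def lam_plus_def by (simp add: power2_eq_square algebra_simps)

lemma lam_minus_add_lam_plus: "\<beta> \<ge> 0 \<Longrightarrow> lam_minus \<beta> + lam_plus \<beta> = 2 * (1 + \<beta>)"
  unfolding lam_minus_def lam_plus_def by (simp add: power2_eq_square algebra_simps)

lemma sqrt_lam_minus_mult_lam_plus: "\<beta> \<ge> 0 \<Longrightarrow> sqrt (lam_minus \<beta> * lam_plus \<beta>) = \<bar>1 - \<beta>\<bar>"
proof -
  assume "\<beta> \<ge> 0"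
  then have "lam_minus \<beta> * lam_plus \<beta> = (1 - \<beta>)\<^sup>2"
    unfolding lam_minus_def lam_plus_def by (simp add: power2_eq_square algebra_simps)
  then show ?thesis by simp
qed

lemma mp_density_eq:
  "l \<in> {lam_minus \<beta>..lam_plus \<beta>} \<Longrightarrow>
    mp_density \<beta> l = sqrt ((l - lam_minus \<beta>) * (lam_plus \<beta> - l)) / l / (2 * pi * \<beta>)"
  unfolding mp_density_def by simp

lemma mp_density_eq_0: "l \<notin> {lam_minus \<beta>..lam_plus \<beta>} \<Longrightarrow> mp_density \<beta> l = 0"
  unfolding mp_density_def by (auto simp: max_def)

lemma mp_density_nonneg: "\<beta> > 0 \<Longrightarrow> 0 \<le> mp_density \<beta> l"
  using lam_minus_nonneg[of \<beta>] mp_density_eq[of l \<beta>] mp_density_eq_0[of l \<beta>]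
  by (cases "l \<in> {lam_minus \<beta>..lam_plus \<beta>}") auto

lemma mp_density_pos:
  "\<beta> > 0 \<Longrightarrow> l \<in> {lam_minus \<beta><..<lam_plus \<beta>} \<Longrightarrow> 0 < mp_density \<beta> l"
  using lam_minus_nonneg[of \<beta>] mp_density_eq[of l \<beta>] by auto

lemma mp_density_has_integral:
  assumes "\<beta> > 0"
  shows "(mp_density \<beta> has_integral 1 - max 0 (1 - 1 / \<beta>)) UNIV"
proof -
  have "((\<lambda>l. sqrt ((l - lam_minus \<beta>) * (lam_plus \<beta> - l)) / l / (2 * pi * \<beta>)) has_integral
      (pi * (lam_minus \<beta> + lam_plus \<beta>) / 2 - pi * sqrt (lam_minus \<beta> * lam_plus \<beta>)) / (2 * pi * \<beta>))
      {lam_minus \<beta>..lam_plus \<beta>}"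
    using assms lam_minus_nonneg lam_minus_less_lam_plus
    by (intro has_integral_divide sqrt_quadratic_div_has_integral)
  moreover have "(pi * (lam_minus \<beta> + lam_plus \<beta>) / 2 - pi * sqrt (lam_minus \<beta> * lam_plus \<beta>))
      / (2 * pi * \<beta>) = (1 + \<beta> - \<bar>1 - \<beta>\<bar>) / (2 * \<beta>)"
    using assms by (simp add: lam_minus_add_lam_plus sqrt_lam_minus_mult_lam_plus field_simps)
  ultimately have "(mp_density \<beta> has_integral (1 + \<beta> - \<bar>1 - \<beta>\<bar>) / (2 * \<beta>))
      {lam_minus \<beta>..lam_plus \<beta>}"
    by (metis (no_types, lifting) has_integral_eq mp_density_eq)
  then have "(mp_density \<beta> has_integral (1 + \<beta> - \<bar>1 - \<beta>\<bar>) / (2 * \<beta>)) UNIV"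
    by (rule has_integral_on_superset) (auto simp: mp_density_eq_0)
  moreover have "(1 + \<beta> - \<bar>1 - \<beta>\<bar>) / (2 * \<beta>) = 1 - max 0 (1 - 1 / \<beta>)"
    using assms by (simp add: field_simps abs_if max_def)
  ultimately show ?thesis by simp
qed

lemma integrable_mp_density:
  assumes "\<beta> > 0"
  shows "integrable lborel (mp_density \<beta>)"
    and "(LINT l|lborel. mp_density \<beta> l) = 1 - max 0 (1 - 1 / \<beta>)"
proof -
  have meas: "mp_density \<beta> \<in> borel_measurable borel" unfolding mp_density_def by measurable
  note int = mp_density_has_integral[OF assms] and nonneg = mp_density_nonneg[OF assms]
  show *: "integrable lborel (mp_density \<beta>)"
    using nn_integral_has_integral_lborel[OF meas nonneg int] meas nonneg
    by (intro integrableI_nonneg) auto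
  show "(LINT l|lborel. mp_density \<beta> l) = 1 - max 0 (1 - 1 / \<beta>)"
    using has_integral_unique[OF has_integral_integral_lborel[OF *] int] .
qed

lemma integrable_mp_density_mult:
  assumes "\<beta> > 0" "continuous_on UNIV f"
  shows "integrable lborel (\<lambda>l. mp_density \<beta> l * f l)"
proof -
  obtain B where B: "\<forall>l \<in> {lam_minus \<beta>..lam_plus \<beta>}. \<bar>f l\<bar> \<le> B"
    using compact_imp_bounded[OF compact_continuous_image[OF
        continuous_on_subset[OF assms(2)] compact_Icc[of "lam_minus \<beta>" "lam_plus \<beta>"]]]
    by (auto simp: bounded_iff)
  show ?thesis
  proof (rule Bochner_Integration.integrable_bound)
    show "integrable lborel (\<lambda>l. B * mp_density \<beta> l)"
      using integrable_mp_density(1)[OF assms(1)] by simp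
    show "(\<lambda>l. mp_density \<beta> l * f l) \<in> borel_measurable lborel"
      using borel_measurable_continuous_onI[OF assms(2)] unfolding mp_density_def by measurable
    have "\<bar>mp_density \<beta> l * f l\<bar> \<le> \<bar>B * mp_density \<beta> l\<bar>" for l
    proof (cases "l \<in> {lam_minus \<beta>..lam_plus \<beta>}")
      case True
      then have "\<bar>f l\<bar> \<le> \<bar>B\<bar>" using B by fastforce
      then show ?thesis
        using mp_density_nonneg[OF assms(1), of l]
        by (simp add: abs_mult) (metis mult.commute mult_left_mono)
    qed (simp add: mp_density_eq_0)
    then show "AE l in lborel. norm (mp_density \<beta> l * f l) \<le> norm (B * mp_density \<beta> l)"
      by simp
  qed
qed

lemma mp_int_diff:
  assumes "\<beta> > 0" "continuous_on UNIV f" "continuous_on UNIV g"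
  shows "mp_int \<beta> (\<lambda>l. f l - g l) = mp_int \<beta> f - mp_int \<beta> g"
  using integrable_mp_density_mult[OF assms(1,2)] integrable_mp_density_mult[OF assms(1,3)]
  unfolding mp_int_def by (simp add: right_diff_distrib algebra_simps)

lemma mp_int_cmult: "mp_int \<beta> (\<lambda>l. c * f l) = c * mp_int \<beta> f"
  unfolding mp_int_def by (simp add: algebra_simps)

lemma mp_int_const:
  assumes "\<beta> > 0"
  shows "mp_int \<beta> (\<lambda>_. c) = c"
proof -
  have "mp_int \<beta> (\<lambda>_. c) = c * (max 0 (1 - 1 / \<beta>) + (LINT l|lborel. mp_density \<beta> l))"
    unfolding mp_int_def by (simp add: algebra_simps)
  then show ?thesis using integrable_mp_density(2)[OF assms] by simp
qed

lemma mp_int_mono: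
  assumes "\<beta> > 0" "continuous_on UNIV f" "continuous_on UNIV g" "\<And>l. f l \<le> g l"
  shows "mp_int \<beta> f \<le> mp_int \<beta> g"
proof -
  have "(LINT l|lborel. mp_density \<beta> l * f l) \<le> (LINT l|lborel. mp_density \<beta> l * g l)"
    using integrable_mp_density_mult[OF assms(1,2)] integrable_mp_density_mult[OF assms(1,3)]
      assms(4) mp_density_nonneg[OF assms(1)]
    by (intro integral_mono) (auto intro: mult_left_mono)
  then show ?thesis unfolding mp_int_def using assms(4)[of 0] by (intro add_mono mult_left_mono) auto
qed

lemma mp_int_pos:
  assumes "\<beta> > 0" "continuous_on UNIV f" "\<And>l. 0 \<le> f l"
    and "lam_minus \<beta> \<le> u" "u < v" "v \<le> lam_plus \<beta>" "\<And>l. l \<in> {u<..<v} \<Longrightarrow> 0 < f l"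
  shows "0 < mp_int \<beta> f"
proof -
  have nonneg: "0 \<le> mp_density \<beta> l * f l" for l
    using mp_density_nonneg[OF assms(1)] assms(3) by simp
  have "(LINT l|lborel. mp_density \<beta> l * f l) \<noteq> 0"
  proof
    assume "(LINT l|lborel. mp_density \<beta> l * f l) = 0"
    then have "AE l in lborel. mp_density \<beta> l * f l = 0"
      using integral_nonneg_eq_0_iff_AE[OF integrable_mp_density_mult[OF assms(1,2)]] nonneg by simp
    moreover have "mp_density \<beta> l * f l \<noteq> 0" if "l \<in> {u<..<v}" for l
      using that assms(4-6) assms(7)[OF that] mp_density_pos[OF assms(1), of l] by auto
    ultimately have "AE l in lborel. l \<notin> {u<..<v}" by (auto elim: AE_mp)
    from emeasure_eq_0_AE[OF this] have "emeasure lborel {u<..<v} = 0"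
      by (simp add: greaterThanLessThan_def greaterThan_def lessThan_def Collect_conj_eq)
    then show False using assms(5) by simp
  qed
  moreover have "0 \<le> (LINT l|lborel. mp_density \<beta> l * f l)" using nonneg by simp
  moreover have "0 \<le> max 0 (1 - 1 / \<beta>) * f 0" using assms(3)[of 0] by simp
  ultimately show ?thesis unfolding mp_int_def by linarith
qed

lemma mp_int_pos_part_pos:
  assumes "\<beta> > 0" "x < lam_plus \<beta>"
  shows "0 < mp_int \<beta> (\<lambda>l. max (l - x) 0)"
  using assms lam_minus_less_lam_plus[OF assms(1)]
  by (intro mp_int_pos[where u = "max x (lam_minus \<beta>)" and v = "lam_plus \<beta>"] continuous_intros)
    auto

lemma mp_int_neg_part_pos:
  assumes "\<beta> > 0" "lam_t_minus \<beta> < x"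
  shows "0 < mp_int \<beta> (\<lambda>l. max (x - l) 0)"
proof (cases "lam_minus \<beta> < x")
  case True
  then show ?thesis
    using assms lam_minus_less_lam_plus[OF assms(1)]
    by (intro mp_int_pos[where u = "lam_minus \<beta>" and v = "min x (lam_plus \<beta>)"] continuous_intros)
      auto
next
  case False
  have "x > 0" using assms(2) lam_minus_nonneg[of \<beta>] unfolding lam_t_minus_def by (auto split: if_splits)
  moreover have "\<beta> > 1"
    using False assms(2) \<open>x > 0\<close> unfolding lam_t_minus_def lam_minus_def
    by (cases "\<beta> = 1") (auto split: if_splits)
  ultimately have "0 < max 0 (1 - 1 / \<beta>) * max (x - 0) 0" by simp
  moreover have "0 \<le> (LINT l|lborel. mp_density \<beta> l * max (x - l) 0)"
    using mp_density_nonneg[OF assms(1)] by simp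
  ultimately show ?thesis unfolding mp_int_def by linarith
qed

section \<open>Convex conjugates\<close>

definition convex_conjugate :: "(real \<Rightarrow> real) \<Rightarrow> real \<Rightarrow> ereal" where
  "convex_conjugate f t = (SUP \<alpha>. ereal (\<alpha> * t - f \<alpha>))"

lemma convex_conjugate_ge: "ereal (\<alpha> * t - f \<alpha>) \<le> convex_conjugate f t"
  unfolding convex_conjugate_def by (rule SUP_upper) simp

lemma convex_conjugate_eq_iff:
  "convex_conjugate f t = ereal (\<gamma> * t - f \<gamma>) \<longleftrightarrow> (\<forall>\<alpha>. f \<gamma> - t * \<gamma> \<le> f \<alpha> - t * \<alpha>)"
proof
  assume "convex_conjugate f t = ereal (\<gamma> * t - f \<gamma>)"
  then show "\<forall>\<alpha>. f \<gamma> - t * \<gamma> \<le> f \<alpha> - t * \<alpha>"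
    using convex_conjugate_ge[of _ t f] by (auto simp: algebra_simps)
next
  assume "\<forall>\<alpha>. f \<gamma> - t * \<gamma> \<le> f \<alpha> - t * \<alpha>"
  then have "convex_conjugate f t \<le> ereal (\<gamma> * t - f \<gamma>)"
    unfolding convex_conjugate_def by (intro SUP_least) (auto simp: algebra_simps)
  then show "convex_conjugate f t = ereal (\<gamma> * t - f \<gamma>)"
    using convex_conjugate_ge[of \<gamma> t f] by simp
qed

lemma tilted_minimizer_derivative:
  assumes "(f has_real_derivative D) (at \<gamma>)" "\<And>\<alpha>. f \<gamma> - t * \<gamma> \<le> f \<alpha> - t * \<alpha>"
  shows "D = t"
proof -
  have "((\<lambda>\<alpha>. f \<alpha> - t * \<alpha>) has_real_derivative D - t) (at \<gamma>)"
    using assms(1) by (auto intro!: derivative_eq_intros)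
  then have "D - t = 0" by (rule DERIV_local_min[where d = 1]) (use assms(2) in auto)
  then show ?thesis by simp
qed

lemma convex_conjugate_diff_le:
  assumes "f differentiable (at \<gamma>)"
    and "convex_conjugate f t1 = ereal (\<alpha> * t1 - f \<alpha>)"
    and "convex_conjugate f t2 = ereal (\<gamma> * t2 - f \<gamma>)"
  shows "convex_conjugate f t2 - convex_conjugate f t1 \<le> ereal (\<gamma> * (t2 - t1))"
    and "convex_conjugate f t2 - convex_conjugate f t1 = ereal (\<gamma> * (t2 - t1)) \<longleftrightarrow> t1 = t2"
proof -
  have le: "\<gamma> * t1 - f \<gamma> \<le> \<alpha> * t1 - f \<alpha>"
    using convex_conjugate_ge[of \<gamma> t1 f] assms(2) by simp
  then show "convex_conjugate f t2 - convex_conjugate f t1 \<le> ereal (\<gamma> * (t2 - t1))"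
    using assms(2,3) by (simp add: algebra_simps)
  show "convex_conjugate f t2 - convex_conjugate f t1 = ereal (\<gamma> * (t2 - t1)) \<longleftrightarrow> t1 = t2"
  proof
    assume "convex_conjugate f t2 - convex_conjugate f t1 = ereal (\<gamma> * (t2 - t1))"
    then have "convex_conjugate f t1 = ereal (\<gamma> * t1 - f \<gamma>)"
      using assms(2,3) by (simp add: algebra_simps)
    moreover obtain D where "(f has_real_derivative D) (at \<gamma>)"
      using assms(1) by (auto simp: real_differentiable_def)
    ultimately show "t1 = t2"
      using assms(3) tilted_minimizer_derivative unfolding convex_conjugate_eq_iff by metis
  qed (use assms(3) in simp)
qed

lemma coercive_attains_min:
  fixes g :: "real \<Rightarrow> real"
  assumes "continuous_on UNIV g" "k > 0" "\<And>\<alpha>. k * \<bar>\<alpha>\<bar> - C \<le> g \<alpha>"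
  shows "\<exists>\<gamma>. \<forall>\<alpha>. g \<gamma> \<le> g \<alpha>"
proof -
  define R where "R = \<bar>C + g 0\<bar> / k"
  have "R \<ge> 0" unfolding R_def using assms(2) by simp
  then obtain \<gamma> where \<gamma>: "\<And>\<alpha>. \<alpha> \<in> {- R..R} \<Longrightarrow> g \<gamma> \<le> g \<alpha>" "g \<gamma> \<le> g 0"
    using continuous_attains_inf[OF compact_Icc _ continuous_on_subset[OF assms(1)], of "- R" R]
    by fastforce
  have "g \<gamma> \<le> g \<alpha>" if "\<alpha> \<notin> {- R..R}" for \<alpha>
  proof -
    have "k * R < k * \<bar>\<alpha>\<bar>" using that assms(2) by (intro mult_strict_left_mono) auto
    then have "C + g 0 < k * \<bar>\<alpha>\<bar>" unfolding R_def using assms(2) by simp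
    then show ?thesis using assms(3)[of \<alpha>] \<gamma>(2) by simp
  qed
  then show ?thesis using \<gamma>(1) by blast
qed

lemma tilted_minimizer_sign:
  fixes f :: "real \<Rightarrow> real"
  assumes "f differentiable (at 0)" "f 0 = 0" "\<And>\<alpha>. c * \<alpha> \<le> f \<alpha>"
    and "\<And>\<alpha>. f \<gamma> - t * \<gamma> \<le> f \<alpha> - t * \<alpha>" "t \<noteq> c"
  shows "(c - t) * \<gamma> < 0"
proof -
  obtain D where D: "(f has_real_derivative D) (at 0)"
    using assms(1) by (auto simp: real_differentiable_def)
  have "\<gamma> \<noteq> 0"
  proof
    assume "\<gamma> = 0"
    then have "D = t" using tilted_minimizer_derivative[OF D] assms(4) by simp
    moreover have "D = c" using tilted_minimizer_derivative[OF D] assms(2,3) by simp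
    ultimately show False using assms(5) by simp
  qed
  moreover have "(c - t) * \<gamma> \<le> 0" using assms(4)[of 0] assms(2) assms(3)[of \<gamma>] by (simp add: algebra_simps)
  ultimately show ?thesis using assms(5) by (simp add: order_le_less)
qed

section \<open>The log-moment function psi\<close>

lemma has_real_derivative_integral_Lipschitz:
  fixes g :: "real \<Rightarrow> 'a \<Rightarrow> real"
  assumes integrable: "\<And>a. integrable N (g a)"
    and deriv: "\<And>l. ((\<lambda>a. g a l) has_real_derivative g' l) (at a0)"
    and Lipschitz: "\<And>a b l. \<bar>g a l - g b l\<bar> \<le> K l * \<bar>a - b\<bar>"
    and "integrable N K"
  shows "((\<lambda>a. \<integral>l. g a l \<partial>N) has_real_derivative (\<integral>l. g' l \<partial>N)) (at a0)"
  unfolding has_field_derivative_iff tendsto_at_iff_sequentially comp_def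
proof (intro allI impI)
  fix X :: "nat \<Rightarrow> real"
  assume X: "\<forall>i. X i \<in> UNIV - {a0}" "X \<longlonglongrightarrow> a0"
  define q where "q i l = (g (X i) l - g a0 l) / (X i - a0)" for i l
  have meas: "q i \<in> borel_measurable N" for i
    unfolding q_def using integrable by (intro borel_measurable_integrable) simp
  have lim: "(\<lambda>i. q i l) \<longlonglongrightarrow> g' l" for l
    using deriv[of l] X unfolding has_field_derivative_iff tendsto_at_iff_sequentially q_def comp_def
    by blast
  have "(\<lambda>i. \<integral>l. q i l \<partial>N) \<longlonglongrightarrow> (\<integral>l. g' l \<partial>N)"
  proof (rule integral_dominated_convergence[where w = K])
    show "g' \<in> borel_measurable N" by (rule borel_measurable_LIMSEQ_real[OF lim meas])
    show "AE l in N. norm (q i l) \<le> K l" for i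
      using Lipschitz[of "X i" _ a0] X(1) by (intro AE_I2) (auto simp: q_def abs_divide divide_le_eq)
  qed (use meas lim assms(4) in auto)
  moreover have "(\<integral>l. q i l \<partial>N) = ((\<integral>l. g (X i) l \<partial>N) - (\<integral>l. g a0 l \<partial>N)) / (X i - a0)" for i
    using integrable unfolding q_def by (simp add: diff_divide_distrib)
  ultimately show "(\<lambda>i. ((\<integral>l. g (X i) l \<partial>N) - (\<integral>l. g a0 l \<partial>N)) / (X i - a0))
      \<longlonglongrightarrow> (\<integral>l. g' l \<partial>N)"
    by simp
qed

lemma psi_zero: "M > 0 \<Longrightarrow> psi \<beta> x M 0 = 0"
  unfolding psi_def mp_int_def by (simp add: mgf_YM_zero)

lemma psi_differentiable:
  assumes "\<beta> > 0" "M > 0"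
  shows "psi \<beta> x M differentiable (at \<alpha>)"
proof -
  obtain L' where L': "\<And>s. ((\<lambda>s. ln (mgf_YM M s)) has_real_derivative L' s) (at s)"
    by (rule that[OF ln_mgf_YM_has_derivative[OF assms(2)]])
  have chain: "((\<lambda>a. ln (mgf_YM M (a * (l - x)))) has_real_derivative L' (\<alpha> * (l - x)) * (l - x)) (at \<alpha>)"
    for l
    by (rule DERIV_chain2[OF L']) (auto intro!: derivative_eq_intros)
  have integral: "((\<lambda>a. LINT l|lborel. mp_density \<beta> l * ln (mgf_YM M (a * (l - x)))) has_real_derivative
      (LINT l|lborel. mp_density \<beta> l * (L' (\<alpha> * (l - x)) * (l - x)))) (at \<alpha>)"
  proof (rule has_real_derivative_integral_Lipschitz[where K = "\<lambda>l. mp_density \<beta> l * (M * \<bar>l - x\<bar>)"])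
    show "integrable lborel (\<lambda>l. mp_density \<beta> l * ln (mgf_YM M (a * (l - x))))" for a
      using assms by (intro integrable_mp_density_mult continuous_on_ln_mgf_YM_comp continuous_intros)
    show "integrable lborel (\<lambda>l. mp_density \<beta> l * (M * \<bar>l - x\<bar>))"
      using assms by (intro integrable_mp_density_mult continuous_intros)
    show "\<bar>mp_density \<beta> l * ln (mgf_YM M (a * (l - x))) - mp_density \<beta> l * ln (mgf_YM M (b * (l - x)))\<bar>
        \<le> mp_density \<beta> l * (M * \<bar>l - x\<bar>) * \<bar>a - b\<bar>" for a b l
    proof -
      have "\<bar>ln (mgf_YM M (a * (l - x))) - ln (mgf_YM M (b * (l - x)))\<bar> \<le> M * \<bar>l - x\<bar> * \<bar>a - b\<bar>"
        using ln_mgf_YM_Lipschitz[OF assms(2), of "a * (l - x)" "b * (l - x)"]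
        by (simp add: left_diff_distrib[symmetric] abs_mult mult_ac)
      then show ?thesis
        using mp_density_nonneg[OF assms(1), of l]
        by (simp add: right_diff_distrib[symmetric] abs_mult mult_left_mono mult.assoc)
    qed
  qed (use chain in \<open>auto intro: DERIV_cmult\<close>)
  have "psi \<beta> x M = (\<lambda>a. max 0 (1 - 1 / \<beta>) * ln (mgf_YM M (a * (0 - x)))
      + (LINT l|lborel. mp_density \<beta> l * ln (mgf_YM M (a * (l - x)))))"
    by (intro ext) (simp only: psi_def mp_int_def)
  then show ?thesis
    unfolding real_differentiable_def using DERIV_add[OF DERIV_cmult[OF chain[of 0]] integral] by auto
qed

lemma psi_ge_mean:
  assumes "\<beta> > 0" "M > 0"
  shows "\<alpha> * YM_mean M * (lam_bar \<beta> - x) \<le> psi \<beta> x M \<alpha>"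
proof -
  have "mp_int \<beta> (\<lambda>l. \<alpha> * YM_mean M * (l - x)) = \<alpha> * YM_mean M * (lam_bar \<beta> - x)"
    using assms(1) unfolding mp_int_cmult lam_bar_def
    by (subst mp_int_diff) (auto simp: mp_int_const intro: continuous_intros)
  moreover have "\<alpha> * YM_mean M * (l - x) \<le> ln (mgf_YM M (\<alpha> * (l - x)))" for l
    using ln_mgf_YM_ge_mean[OF assms(2), of "\<alpha> * (l - x)"] by (simp add: mult_ac)
  then have "mp_int \<beta> (\<lambda>l. \<alpha> * YM_mean M * (l - x)) \<le> psi \<beta> x M \<alpha>"
    unfolding psi_def using assms
    by (intro mp_int_mono continuous_on_ln_mgf_YM_comp continuous_intros)
  ultimately show ?thesis by simp
qed

lemma mp_int_ln_mgf_YM_ge: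
  assumes "\<beta> > 0" "M \<ge> 1" "0 \<le> a" "continuous_on UNIV u"
  shows "a * ((M - 1) * mp_int \<beta> (\<lambda>l. max (u l) 0) - mp_int \<beta> (\<lambda>l. max (- u l) 0)) - 2 * M
    \<le> mp_int \<beta> (\<lambda>l. ln (mgf_YM M (a * u l)))"
proof -
  have "mp_int \<beta> (\<lambda>l. a * ((M - 1) * max (u l) 0 - max (- u l) 0) - 2 * M)
      = a * ((M - 1) * mp_int \<beta> (\<lambda>l. max (u l) 0) - mp_int \<beta> (\<lambda>l. max (- u l) 0)) - 2 * M"
    using assms
    by (simp add: mp_int_diff mp_int_cmult mp_int_const continuous_on_const continuous_on_mult_left
      continuous_on_diff continuous_on_max continuous_on_minus)
  moreover have "mp_int \<beta> (\<lambda>l. a * ((M - 1) * max (u l) 0 - max (- u l) 0) - 2 * M)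
      \<le> mp_int \<beta> (\<lambda>l. ln (mgf_YM M (a * u l)))"
    using assms ln_mgf_YM_ge_piecewise_linear
    by (intro mp_int_mono continuous_on_ln_mgf_YM_comp continuous_intros) auto
  ultimately show ?thesis by simp
qed

lemma psi_ge_rays:
  fixes x :: real
  assumes "\<beta> > 0" "M \<ge> 1" "0 \<le> a"
  defines "P \<equiv> mp_int \<beta> (\<lambda>l. max (l - x) 0)" and "N \<equiv> mp_int \<beta> (\<lambda>l. max (x - l) 0)"
  shows "a * ((M - 1) * P - N) - 2 * M \<le> psi \<beta> x M a"
    and "a * ((M - 1) * N - P) - 2 * M \<le> psi \<beta> x M (- a)"
proof -
  show "a * ((M - 1) * P - N) - 2 * M \<le> psi \<beta> x M a"
    using mp_int_ln_mgf_YM_ge[OF assms(1-3), of "\<lambda>l. l - x"]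
    unfolding psi_def P_def N_def by (simp add: continuous_intros)
  have "psi \<beta> x M (- a) = mp_int \<beta> (\<lambda>l. ln (mgf_YM M (a * (x - l))))"
    unfolding psi_def by (simp add: algebra_simps)
  then show "a * ((M - 1) * N - P) - 2 * M \<le> psi \<beta> x M (- a)"
    using mp_int_ln_mgf_YM_ge[OF assms(1-3), of "\<lambda>l. x - l"]
    unfolding P_def N_def by (simp add: continuous_intros)
qed

section \<open>The Legendre transform of psi\<close>

lemma psi_star_eq_convex_conjugate: "psi_star \<beta> x M = convex_conjugate (psi \<beta> x M)"
  unfolding psi_star_def[abs_def] convex_conjugate_def by simp

lemma psi_has_tilted_minimizer:
  fixes x :: real
  assumes "\<beta> > 0" "M \<ge> 1"
  defines "P \<equiv> mp_int \<beta> (\<lambda>l. max (l - x) 0)" and "N \<equiv> mp_int \<beta> (\<lambda>l. max (x - l) 0)"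
  assumes "t < (M - 1) * P - N" "- t < (M - 1) * N - P"
  shows "\<exists>\<gamma>. \<forall>\<alpha>. psi \<beta> x M \<gamma> - t * \<gamma> \<le> psi \<beta> x M \<alpha> - t * \<alpha>"
proof (rule coercive_attains_min)
  have "M > 0" using assms(2) by simp
  show "continuous_on UNIV (\<lambda>\<alpha>. psi \<beta> x M \<alpha> - t * \<alpha>)"
    using psi_differentiable[OF assms(1) \<open>M > 0\<close>]
    by (intro continuous_intros) (meson continuous_at_imp_continuous_on differentiable_imp_continuous_within)
  let ?k = "min ((M - 1) * P - N - t) ((M - 1) * N - P + t)"
  show "?k > 0" using assms(5,6) by simp
  show "?k * \<bar>\<alpha>\<bar> - 2 * M \<le> psi \<beta> x M \<alpha> - t * \<alpha>" for \<alpha>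
  proof (cases "\<alpha> \<ge> 0")
    case True
    have "?k * \<alpha> \<le> ((M - 1) * P - N - t) * \<alpha>" using True by (intro mult_right_mono) auto
    then show ?thesis using psi_ge_rays(1)[OF assms(1,2) True, of x] True
      unfolding P_def N_def by (simp add: algebra_simps)
  next
    case False
    have "?k * (- \<alpha>) \<le> ((M - 1) * N - P + t) * (- \<alpha>)" using False by (intro mult_right_mono) auto
    then show ?thesis using psi_ge_rays(2)[OF assms(1,2), of "- \<alpha>" x] False
      unfolding P_def N_def by (simp add: algebra_simps)
  qed
qed

lemma psi_star_nonneg: "M > 0 \<Longrightarrow> 0 \<le> psi_star \<beta> x M t"
  using convex_conjugate_ge[of 0 t "psi \<beta> x M"] psi_zero[of M \<beta> x]
  by (simp add: psi_star_eq_convex_conjugate zero_ereal_def)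

lemma psi_star_attained_eventually:
  assumes "\<beta> > 0" "lam_t_minus \<beta> < x" "x < lam_plus \<beta>"
  shows "eventually (\<lambda>M. \<exists>\<gamma>. (psi \<beta> x M has_real_derivative t) (at \<gamma>)
      \<and> psi_star \<beta> x M t = ereal (\<gamma> * t - psi \<beta> x M \<gamma>)
      \<and> (t < lam_bar \<beta> - x \<longrightarrow> \<gamma> < 0) \<and> (t > lam_bar \<beta> - x \<longrightarrow> \<gamma> > 0)) at_top"
proof -
  define P where "P = mp_int \<beta> (\<lambda>l. max (l - x) 0)"
  define N where "N = mp_int \<beta> (\<lambda>l. max (x - l) 0)"
  define K where "K = lam_bar \<beta> - x"
  have "P > 0" "N > 0"
    unfolding P_def N_def using assms mp_int_pos_part_pos mp_int_neg_part_pos by auto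
  have lin: "eventually (\<lambda>M. C < (M - 1) * D) at_top" if "D > 0" for C D :: real
    using that by real_asymp
  have "((\<lambda>M. YM_mean M * K) \<longlongrightarrow> K) at_top"
    using tendsto_mult_right[OF YM_mean_tendsto, of K] by simp
  then have mean: "eventually (\<lambda>M. (t < K \<longrightarrow> t < YM_mean M * K) \<and> (K < t \<longrightarrow> YM_mean M * K < t)) at_top"
    by (cases "t < K"; cases "K < t") (auto dest: order_tendstoD)
  have "eventually (\<lambda>M. M \<ge> 1 \<and> t < (M - 1) * P - N \<and> - t < (M - 1) * N - P) at_top"
    using lin[OF \<open>P > 0\<close>, of "t + N"] lin[OF \<open>N > 0\<close>, of "P - t"] eventually_ge_at_top[of 1]
    by eventually_elim auto
  with mean show ?thesis
  proof eventually_elim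
    case (elim M)
    then have "M > 0" by simp
    obtain \<gamma> where min: "\<And>\<alpha>. psi \<beta> x M \<gamma> - t * \<gamma> \<le> psi \<beta> x M \<alpha> - t * \<alpha>"
      using psi_has_tilted_minimizer[OF assms(1), of M t x] elim unfolding P_def N_def by blast
    obtain D where D: "(psi \<beta> x M has_real_derivative D) (at \<gamma>)"
      using psi_differentiable[OF assms(1) \<open>M > 0\<close>] by (auto simp: real_differentiable_def)
    have "D = t" using tilted_minimizer_derivative[OF D min] .
    moreover have "psi_star \<beta> x M t = ereal (\<gamma> * t - psi \<beta> x M \<gamma>)"
      using min unfolding psi_star_eq_convex_conjugate convex_conjugate_eq_iff by blast
    moreover have "YM_mean M * K * \<alpha> \<le> psi \<beta> x M \<alpha>" for \<alpha>
      using psi_ge_mean[OF assms(1) \<open>M > 0\<close>] unfolding K_def by (simp add: mult_ac)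
    then have "(YM_mean M * K - t) * \<gamma> < 0" if "t \<noteq> YM_mean M * K"
      by (rule tilted_minimizer_sign[OF psi_differentiable[OF assms(1) \<open>M > 0\<close>]
        psi_zero[OF \<open>M > 0\<close>] _ min that])
    ultimately show ?case
      using D elim unfolding K_def[symmetric] by (auto simp: mult_less_0_iff)
  qed
qed

lemma psi_star_diff_le:
  assumes "\<beta> > 0" "M > 0"
    and "psi_star \<beta> x M t1 = ereal (\<alpha> * t1 - psi \<beta> x M \<alpha>)"
    and "psi_star \<beta> x M t2 = ereal (\<gamma> * t2 - psi \<beta> x M \<gamma>)"
  shows "psi_star \<beta> x M t2 - psi_star \<beta> x M t1 \<le> ereal (\<gamma> * (t2 - t1))
    \<and> (psi_star \<beta> x M t2 - psi_star \<beta> x M t1 = ereal (\<gamma> * (t2 - t1)) \<longleftrightarrow> t1 = t2)"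
  using convex_conjugate_diff_le[OF psi_differentiable[OF assms(1,2)]] assms(3,4)
  unfolding psi_star_eq_convex_conjugate by blast

theorem proposition3:
  fixes \<beta> :: real
  assumes "\<beta> > 0"
  shows "(\<forall>x M t. M > 0 \<longrightarrow> psi_star \<beta> x M t \<ge> 0)
    \<and> (\<forall>x t. lam_t_minus \<beta> < x \<and> x < lam_plus \<beta> \<longrightarrow>
         (\<exists>M0. \<forall>M\<ge>M0. \<exists>\<gamma>.
            (psi \<beta> x M has_real_derivative t) (at \<gamma>)
            \<and> psi_star \<beta> x M t = ereal (\<gamma> * t - psi \<beta> x M \<gamma>)
            \<and> (t < lam_bar \<beta> - x \<longrightarrow> \<gamma> < 0)
            \<and> (t > lam_bar \<beta> - x \<longrightarrow> \<gamma> > 0)))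
    \<and> (\<forall>x t1 t2. lam_t_minus \<beta> < x \<and> x < lam_plus \<beta> \<longrightarrow>
         (\<exists>M0. \<forall>M\<ge>M0. \<forall>\<alpha> \<gamma>.
            psi_star \<beta> x M t1 = ereal (\<alpha> * t1 - psi \<beta> x M \<alpha>)
            \<and> psi_star \<beta> x M t2 = ereal (\<gamma> * t2 - psi \<beta> x M \<gamma>)
            \<longrightarrow> psi_star \<beta> x M t2 - psi_star \<beta> x M t1 \<le> ereal (\<gamma> * (t2 - t1))
              \<and> (psi_star \<beta> x M t2 - psi_star \<beta> x M t1 = ereal (\<gamma> * (t2 - t1))
                   \<longleftrightarrow> t1 = t2)))"
  apply (intro conjI allI impI)
  subgoal by (rule psi_star_nonneg)
  subgoal for x t
    using psi_star_attained_eventually[OF assms, of x t] unfolding eventually_at_top_linorder by blast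
  subgoal using psi_star_diff_le[OF assms] by (intro exI[of _ 1]) auto
  done

end
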